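(* Let $(G,u,v,\alpha,\beta)$ be a Guvab with $\beta=1$. If there exists $N\ge0$ such that $\{W_n\}_{n\ge N}$ is a constant sequence, then $\{W_n\}_{n\ge1}$ is a constant sequence.
   Context: A Guvab is a tuple $(G,u,v,\alpha,\beta)$ where $G$ is a finite, connected, simple graph, $u,v\in V(G)$, and $\alpha,\beta\in[0,1]$ with $\alpha\le\beta$. A random walk on $G$ with starting vertex $w$ and laziness $\gamma$ is the Markov chain $R_0=w$ and, for $i\ge1$, $R_i=R_{i-1}$ with probability $\gamma$ and $R_i=t$ with probability $\frac{1-\gamma}{\deg(R_{i-1})}$ for each neighbor $t$ of $R_{i-1}$. $\mu_n$ is the distribution after $n$ steps of the walk from $u$ with laziness $\alpha$, $\nu_n$ that of the walk from $v$ with laziness $\beta$, and $W_n=W(\mu_n,\nu_n)$ is the Wasserstein ($L^1$ optimal transport) distance with respect to the graph distance. *)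

theory Defs
  imports "HOL-Analysis.Analysis"
begin

definition gpath :: "('a \<Rightarrow> 'a \<Rightarrow> bool) \<Rightarrow> 'a \<Rightarrow> 'a \<Rightarrow> nat \<Rightarrow> bool" where
  "gpath E x y n \<longleftrightarrow> (\<exists>f :: nat \<Rightarrow> 'a. f 0 = x \<and> f n = y \<and> (\<forall>i<n. E (f i) (f (Suc i))))"

definition connected_simple_graph :: "'a set \<Rightarrow> ('a \<Rightarrow> 'a \<Rightarrow> bool) \<Rightarrow> bool" where
  "connected_simple_graph V E \<longleftrightarrow>
     finite V \<and> V \<noteq> {} \<and>
     (\<forall>x y. E x y \<longrightarrow> x \<in> V \<and> y \<in> V) \<and>
     (\<forall>x y. E x y \<longrightarrow> E y x) \<and>
     (\<forall>x. \<not> E x x) \<and>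
     (\<forall>x\<in>V. \<forall>y\<in>V. \<exists>n. gpath E x y n)"

definition gdist :: "('a \<Rightarrow> 'a \<Rightarrow> bool) \<Rightarrow> 'a \<Rightarrow> 'a \<Rightarrow> nat" where
  "gdist E x y = (LEAST n. gpath E x y n)"

definition deg :: "'a set \<Rightarrow> ('a \<Rightarrow> 'a \<Rightarrow> bool) \<Rightarrow> 'a \<Rightarrow> nat" where
  "deg V E x = card {y\<in>V. E x y}"

definition trans_prob :: "'a set \<Rightarrow> ('a \<Rightarrow> 'a \<Rightarrow> bool) \<Rightarrow> real \<Rightarrow> 'a \<Rightarrow> 'a \<Rightarrow> real" where
  "trans_prob V E g x y =
     (if x = y then g else if E x y then (1 - g) / real (deg V E x) else 0)"

fun walk_dist :: "'a set \<Rightarrow> ('a \<Rightarrow> 'a \<Rightarrow> bool) \<Rightarrow> real \<Rightarrow> 'a \<Rightarrow> nat \<Rightarrow> 'a \<Rightarrow> real" where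
  "walk_dist V E g w 0 = (\<lambda>y. if y = w then 1 else 0)"
| "walk_dist V E g w (Suc n) =
     (\<lambda>y. \<Sum>x\<in>V. walk_dist V E g w n x * trans_prob V E g x y)"

definition couplings :: "'a set \<Rightarrow> ('a \<Rightarrow> real) \<Rightarrow> ('a \<Rightarrow> real) \<Rightarrow> ('a \<Rightarrow> 'a \<Rightarrow> real) set" where
  "couplings V mu nu = {p. (\<forall>x y. p x y \<ge> 0) \<and> (\<forall>x y. (x \<notin> V \<or> y \<notin> V) \<longrightarrow> p x y = 0) \<and>
      (\<forall>x\<in>V. (\<Sum>y\<in>V. p x y) = mu x) \<and> (\<forall>y\<in>V. (\<Sum>x\<in>V. p x y) = nu y)}"

definition wasserstein :: "'a set \<Rightarrow> ('a \<Rightarrow> 'a \<Rightarrow> bool) \<Rightarrow> ('a \<Rightarrow> real) \<Rightarrow> ('a \<Rightarrow> real) \<Rightarrow> real" where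
  "wasserstein V E mu nu =
     Inf ((\<lambda>p. \<Sum>x\<in>V. \<Sum>y\<in>V. p x y * real (gdist E x y)) ` couplings V mu nu)"

definition W_seq :: "'a set \<Rightarrow> ('a \<Rightarrow> 'a \<Rightarrow> bool) \<Rightarrow> 'a \<Rightarrow> 'a \<Rightarrow> real \<Rightarrow> real \<Rightarrow> nat \<Rightarrow> real" where
  "W_seq V E u v \<alpha> \<beta> n = wasserstein V E (walk_dist V E \<alpha> u n) (walk_dist V E \<beta> v n)"

definition guvab :: "'a set \<Rightarrow> ('a \<Rightarrow> 'a \<Rightarrow> bool) \<Rightarrow> 'a \<Rightarrow> 'a \<Rightarrow> real \<Rightarrow> real \<Rightarrow> bool" where
  "guvab V E u v \<alpha> \<beta> \<longleftrightarrow> connected_simple_graph V E \<and> u \<in> V \<and> v \<in> V \<and>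
     0 \<le> \<alpha> \<and> \<alpha> \<le> \<beta> \<and> \<beta> \<le> 1"

end

theory Submission
  imports Defs "HOL-Library.Function_Algebras"
begin

(* Since beta = 1 the second walk stays at v, so W_n = sum_x mu_n(x) d(x, v) = (T^n f)(u), where T is
   the transition operator of the first walk and f = d(-, v). T is self-adjoint for the
   degree-weighted inner product, so ker T^2 = ker T and T is injective on its finite-dimensional
   range. For g = T f - f this forces T^n g, n >= 1, into the span of {T^k g | k >= N}; as
   (T^k g)(u) = W_(k+1) - W_k vanishes for k >= N, it vanishes for every k >= 1. *)

context vector_space
begin

lemma exists_in_span_of_later_terms:
  assumes "finite B" and in_span: "\<And>j. k \<le> j \<Longrightarrow> y j \<in> span B"
  shows "\<exists>j\<ge>k. y j \<in> span (y ` {Suc j..})"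
proof (rule ccontr)
  assume "\<not> ?thesis"
  then have new: "y j \<notin> span (y ` {Suc j..})" if "k \<le> j" for j
    using that by blast
  have "independent (y ` {j..j + d}) \<and> card (y ` {j..j + d}) = Suc d" if "k \<le> j" for j d
    using that
  proof (induction d arbitrary: j)
    case 0
    have "y j \<noteq> 0"
      using new[OF 0] span_zero by metis
    then show ?case by simp
  next
    case (Suc d)
    let ?S = "y ` {Suc j..Suc j + d}"
    have "span ?S \<subseteq> span (y ` {Suc j..})"
      by (intro span_mono image_mono) auto
    then have notin: "y j \<notin> span ?S"
      using new[OF Suc.prems] by blast
    have "y ` {j..j + Suc d} = insert (y j) ?S"
      by (simp add: atLeastAtMost_insertL[symmetric] del: atLeastAtMost_iff)
    moreover have "independent ?S" "card ?S = Suc d"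
      using Suc.IH[of "Suc j"] Suc.prems by auto
    moreover have "y j \<notin> ?S"
      using notin span_base by blast
    ultimately show ?case
      using notin by (simp add: independent_insertI)
  qed
  from this[of k "card B"] have "independent (y ` {k..k + card B})"
    and card: "card (y ` {k..k + card B}) = Suc (card B)"
    by simp_all
  moreover have "y ` {k..k + card B} \<subseteq> span B"
    using in_span by auto
  ultimately have "card (y ` {k..k + card B}) \<le> card B"
    using independent_span_bound[OF \<open>finite B\<close>] by blast
  then show False
    using card by simp
qed

lemma funpow_linear_diff:
  assumes "Vector_Spaces.linear scale scale T"
  shows "(T ^^ k) (a - b) = (T ^^ k) a - (T ^^ k) b"
proof -
  interpret T: Vector_Spaces.linear scale scale T by (rule assms)
  show ?thesis
  proof (induction k)
    case (Suc k)
    have "(T ^^ Suc k) (a - b) = T ((T ^^ k) a - (T ^^ k) b)"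
      by (simp only: funpow.simps comp_apply Suc.IH)
    then show ?case
      by (simp only: funpow.simps comp_apply T.diff)
  qed simp
qed

(* ker T^2 = ker T makes T injective on its range, so "T^i g lies in the span of the later
   iterates" propagates both up and down the orbit from i = 1 on; finite rank makes it hold for
   some i. *)
lemma power_in_span_of_later_powers:
  assumes lin: "Vector_Spaces.linear scale scale T"
    and ker: "\<And>x. T (T x) = 0 \<Longrightarrow> T x = 0"
    and "finite B" and rank: "range T \<subseteq> span B"
    and "1 \<le> n"
  shows "(T ^^ n) g \<in> span ((\<lambda>i. (T ^^ i) g) ` {M..})"
proof -
  interpret T: Vector_Spaces.linear scale scale T by (rule lin)
  define y where "y i = (T ^^ i) g" for i
  define K where "K M = span (y ` {M..})" for M
  have y_Suc: "y (Suc i) = T (y i)" for i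
    by (simp add: y_def)
  have K_Suc: "K (Suc M) = T ` K M" for M
  proof -
    have "{Suc M..} = Suc ` {M..}"
      by (metis image_add_atLeast plus_1_eq_Suc)
    then have "y ` {Suc M..} = T ` y ` {M..}"
      by (simp add: image_image y_Suc)
    then show ?thesis
      by (simp add: K_def T.span_image)
  qed
  have y_range: "y i \<in> range T" if "1 \<le> i" for i
    using that y_Suc by (cases i) auto
  have K_range: "K (Suc M) \<subseteq> range T" for M
    by (auto simp: K_Suc)
  have inj: "inj_on T (range T)"
  proof (rule inj_onI, clarify)
    fix a b assume "T (T a) = T (T b)"
    then have "T (T (a - b)) = 0" by (simp add: T.diff)
    then have "T (a - b) = 0" by (rule ker)
    then show "T a = T b" by (simp add: T.diff)
  qed
  have redundant_iff: "y i \<in> K (Suc i) \<longleftrightarrow> y (Suc i) \<in> K (Suc (Suc i))" if "1 \<le> i" for i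
  proof
    assume "y i \<in> K (Suc i)"
    then show "y (Suc i) \<in> K (Suc (Suc i))"
      by (simp add: K_Suc[of "Suc i"] y_Suc)
  next
    assume "y (Suc i) \<in> K (Suc (Suc i))"
    then obtain w where w: "w \<in> K (Suc i)" "T (y i) = T w"
      by (auto simp: K_Suc[of "Suc i"] y_Suc)
    moreover have "w \<in> range T"
      using w(1) K_range by blast
    ultimately have "y i = w"
      using inj y_range[OF that] by (auto dest: inj_onD)
    then show "y i \<in> K (Suc i)" using w by simp
  qed
  have "\<And>i. 1 \<le> i \<Longrightarrow> y i \<in> span B"
    using y_range rank by blast
  then obtain k where "1 \<le> k" "y k \<in> K (Suc k)"
    unfolding K_def using exists_in_span_of_later_terms[OF \<open>finite B\<close>] by blast
  moreover have "y i \<in> K (Suc i) \<longleftrightarrow> y 1 \<in> K 2" if "1 \<le> i" for i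
    using that
  proof (induction i rule: nat_induct_at_least)
    case base
    then show ?case by (simp add: numeral_2_eq_2)
  next
    case (Suc i)
    then show ?case using redundant_iff[OF Suc.hyps] by blast
  qed
  ultimately have redundant: "y i \<in> K (Suc i)" if "1 \<le> i" for i
    using that by blast
  then have K_const: "K (Suc i) = K i" if "1 \<le> i" for i
  proof -
    have "{i..} = insert i {Suc i..}"
      by auto
    then have "y ` {i..} = insert (y i) (y ` {Suc i..})"
      by simp
    then show ?thesis
      using redundant[OF that] by (simp add: K_def span_redundant)
  qed
  have "K n = K (n + i)" for i
    using \<open>1 \<le> n\<close> by (induction i) (simp_all add: K_const)
  moreover have "K (n + M) \<subseteq> K M"
    unfolding K_def by (intro span_mono image_mono) auto
  moreover have "y n \<in> K n"
    by (auto simp: K_def intro: span_base)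
  ultimately show ?thesis
    by (auto simp: K_def y_def)
qed

end

(* There is no real_vector instance for function types, so scaling is introduced explicitly. *)
definition fun_scale :: "real \<Rightarrow> ('a \<Rightarrow> real) \<Rightarrow> 'a \<Rightarrow> real" where
  "fun_scale c f = (\<lambda>x. c * f x)"

interpretation fun_vs: vector_space fun_scale
  by unfold_locales (auto simp: fun_scale_def plus_fun_def algebra_simps)

lemma sum_apply: "(\<Sum>i\<in>A. f i) x = (\<Sum>i\<in>A. f i x)"
  by (induction A rule: infinite_finite_induct) auto

lemma orbit_value_eventually_const_imp_const:
  fixes T :: "('a \<Rightarrow> real) \<Rightarrow> 'a \<Rightarrow> real"
  assumes lin: "Vector_Spaces.linear fun_scale fun_scale T"
    and ker: "\<And>a. T (T a) = 0 \<Longrightarrow> T a = 0"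
    and "finite B" and rank: "range T \<subseteq> fun_vs.span B"
    and const: "\<forall>n\<ge>N. (T ^^ n) f u = (T ^^ N) f u"
    and "1 \<le> n"
  shows "(T ^^ n) f u = T f u"
proof -
  define g where "g = T f - f"
  have increment: "(T ^^ k) g u = (T ^^ Suc k) f u - (T ^^ k) f u" for k
    by (simp add: g_def fun_vs.funpow_linear_diff[OF lin] funpow_swap1)
  have tail_orbit_zero: "(T ^^ k) g u = 0" if "N \<le> k" for k
  proof -
    have "(T ^^ Suc k) f u = (T ^^ N) f u" "(T ^^ k) f u = (T ^^ N) f u"
      using that by (intro const[rule_format]; simp)+
    then show ?thesis
      by (simp only: increment diff_self)
  qed
  have tail_zero: "h u = 0" if "h \<in> fun_vs.span ((\<lambda>i. (T ^^ i) g) ` {N..})" for h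
    using that tail_orbit_zero by (induction rule: fun_vs.span_induct_alt) (auto simp: fun_scale_def)
  have step: "(T ^^ Suc k) f u = (T ^^ k) f u" if "1 \<le> k" for k
    using tail_zero[OF fun_vs.power_in_span_of_later_powers[OF lin ker \<open>finite B\<close> rank that]]
    by (simp add: increment)
  show ?thesis
    using \<open>1 \<le> n\<close>
  proof (induction n rule: nat_induct_at_least)
    case (Suc n)
    then show ?case using step[of n] by simp
  qed simp
qed

definition markov_op :: "'a set \<Rightarrow> ('a \<Rightarrow> 'a \<Rightarrow> bool) \<Rightarrow> real \<Rightarrow> ('a \<Rightarrow> real) \<Rightarrow> 'a \<Rightarrow> real" where
  "markov_op V E g a = (\<lambda>x. \<Sum>y\<in>V. trans_prob V E g x y * a y)"

lemma linear_markov_op: "Vector_Spaces.linear fun_scale fun_scale (markov_op V E g)"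
  unfolding Vector_Spaces.linear_iff
  by (auto simp: fun_vs.vector_space_axioms markov_op_def fun_scale_def plus_fun_def fun_eq_iff
      sum.distrib sum_distrib_left distrib_right mult_ac)

lemma range_markov_op:
  "range (markov_op V E g) \<subseteq> fun_vs.span ((\<lambda>y x. trans_prob V E g x y) ` V)"
proof clarify
  fix a
  have "markov_op V E g a = (\<Sum>y\<in>V. fun_scale (a y) (\<lambda>x. trans_prob V E g x y))"
    by (auto simp: markov_op_def fun_scale_def sum_apply mult.commute)
  also have "\<dots> \<in> fun_vs.span ((\<lambda>y x. trans_prob V E g x y) ` V)"
    by (intro fun_vs.span_sum fun_vs.span_scale fun_vs.span_base) auto
  finally show "markov_op V E g a \<in> fun_vs.span ((\<lambda>y x. trans_prob V E g x y) ` V)" .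
qed

lemma sum_walk_dist_mult_eq_markov_op_power:
  assumes "finite V" "u \<in> V"
  shows "(\<Sum>x\<in>V. walk_dist V E g u n x * a x) = (markov_op V E g ^^ n) a u"
proof (induction n arbitrary: a)
  case 0
  have "(\<Sum>x\<in>V. walk_dist V E g u 0 x * a x) = (\<Sum>x\<in>V. if x = u then a x else 0)"
    by (intro sum.cong) auto
  then show ?case
    using assms by simp
next
  case (Suc n)
  have "(\<Sum>x\<in>V. walk_dist V E g u (Suc n) x * a x)
      = (\<Sum>y\<in>V. \<Sum>x\<in>V. walk_dist V E g u n x * trans_prob V E g x y * a y)"
    by (simp add: sum_distrib_right)
  also have "\<dots> = (\<Sum>x\<in>V. walk_dist V E g u n x * markov_op V E g a x)"
    by (subst sum.swap) (simp add: markov_op_def sum_distrib_left mult.assoc)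
  also have "\<dots> = (markov_op V E g ^^ Suc n) a u"
    by (simp add: Suc.IH funpow_swap1)
  finally show ?case .
qed

lemma walk_dist_nonneg:
  assumes "0 \<le> g" "g \<le> 1"
  shows "0 \<le> walk_dist V E g u n x"
proof (induction n arbitrary: x)
  case 0
  then show ?case by simp
next
  case (Suc n)
  have "0 \<le> trans_prob V E g x y" for x y
    using assms by (simp add: trans_prob_def)
  then show ?case
    by (auto intro!: sum_nonneg mult_nonneg_nonneg Suc.IH)
qed

lemma walk_dist_laziness_one:
  assumes "finite V" "v \<in> V"
  shows "walk_dist V E 1 v n = (\<lambda>y. if y = v then 1 else 0)"
proof (induction n)
  case 0
  then show ?case by simp
next
  case (Suc n)
  show ?case
  proof
    fix y
    have "walk_dist V E 1 v (Suc n) y = (\<Sum>x\<in>V. if x = v then trans_prob V E 1 x y else 0)"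
      unfolding walk_dist.simps Suc.IH by (intro sum.cong) auto
    also have "\<dots> = (if y = v then 1 else 0)"
      using assms by (simp add: trans_prob_def)
    finally show "walk_dist V E 1 v (Suc n) y = (if y = v then 1 else 0)" .
  qed
qed

lemma deg_pos_if_adjacent:
  assumes "connected_simple_graph V E" "E x y"
  shows "0 < deg V E x"
proof -
  have "y \<in> {z \<in> V. E x z}" and "finite {z \<in> V. E x z}"
    using assms by (auto simp: connected_simple_graph_def)
  then show ?thesis
    unfolding deg_def by (auto simp: card_gt_0_iff)
qed

lemma deg_pos:
  assumes "connected_simple_graph V E" "2 \<le> card V" "x \<in> V"
  shows "0 < deg V E x"
proof -
  have "\<not> V \<subseteq> {x}"
  proof
    assume "V \<subseteq> {x}"
    then have "card V \<le> 1"
      using card_mono[of "{x}" V] by simp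
    then show False
      using assms(2) by simp
  qed
  then obtain y where y: "y \<in> V" "y \<noteq> x"
    by blast
  then obtain n f where f: "f 0 = x" "f n = y" "\<forall>i<n. E (f i) (f (Suc i))"
    using assms(1,3) unfolding connected_simple_graph_def gpath_def by blast
  then have "E x (f 1)"
    using y by (cases n) auto
  then show ?thesis
    by (rule deg_pos_if_adjacent[OF assms(1)])
qed

lemma markov_op_outside:
  assumes "connected_simple_graph V E" "x \<notin> V"
  shows "markov_op V E g a x = 0"
proof -
  have "trans_prob V E g x y = 0" if "y \<in> V" for y
    using assms that unfolding connected_simple_graph_def trans_prob_def by auto
  then show ?thesis
    by (simp add: markov_op_def)
qed

lemma markov_op_indicator:
  assumes "connected_simple_graph V E" "2 \<le> card V"
  shows "markov_op V E g (indicator V) = indicator V"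
proof
  fix x
  have irrefl: "\<not> E x x"
    using assms(1) by (auto simp: connected_simple_graph_def)
  have fin: "finite V"
    using assms(1) by (simp add: connected_simple_graph_def)
  show "markov_op V E g (indicator V) x = indicator V x"
  proof (cases "x \<in> V")
    case False
    then show ?thesis
      using markov_op_outside[OF assms(1)] by simp
  next
    case True
    have "markov_op V E g (indicator V) x
        = (\<Sum>y\<in>V. (if y = x then g else 0) + (if E x y then (1 - g) / real (deg V E x) else 0))"
      unfolding markov_op_def by (intro sum.cong refl) (auto simp: trans_prob_def irrefl)
    also have "\<dots> = g + (\<Sum>y\<in>{y\<in>V. E x y}. (1 - g) / real (deg V E x))"
      using True fin by (simp add: sum.distrib sum.inter_filter[symmetric])
    also have "\<dots> = 1"
      using deg_pos[OF assms True] by (simp add: deg_def)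
    finally show ?thesis
      using True by simp
  qed
qed

lemma sum_walk_dist:
  assumes "connected_simple_graph V E" "2 \<le> card V" "u \<in> V"
  shows "(\<Sum>x\<in>V. walk_dist V E g u n x) = 1"
proof -
  have fin: "finite V"
    using assms(1) by (simp add: connected_simple_graph_def)
  have "(\<Sum>x\<in>V. walk_dist V E g u n x) = (\<Sum>x\<in>V. walk_dist V E g u n x * indicator V x)"
    by simp
  also have "\<dots> = (markov_op V E g ^^ n) (indicator V) u"
    by (rule sum_walk_dist_mult_eq_markov_op_power[OF fin assms(3)])
  also have "(markov_op V E g ^^ n) (indicator V) = indicator V"
    by (induction n) (simp_all add: markov_op_indicator[OF assms(1,2)])
  finally show ?thesis
    using assms(3) by simp
qed

lemma trans_prob_detailed_balance:
  assumes "connected_simple_graph V E"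
  shows "real (deg V E x) * trans_prob V E g x y = real (deg V E y) * trans_prob V E g y x"
proof -
  have sym: "E x y \<longleftrightarrow> E y x"
    using assms by (auto simp: connected_simple_graph_def)
  show ?thesis
  proof (cases "E x y")
    case True
    then show ?thesis
      using sym deg_pos_if_adjacent[OF assms, of x y] deg_pos_if_adjacent[OF assms, of y x]
      by (auto simp: trans_prob_def)
  next
    case False
    then show ?thesis
      using sym by (auto simp: trans_prob_def)
  qed
qed

lemma markov_op_self_adjoint:
  assumes "connected_simple_graph V E"
  shows "(\<Sum>x\<in>V. real (deg V E x) * markov_op V E g a x * b x)
       = (\<Sum>x\<in>V. real (deg V E x) * a x * markov_op V E g b x)"
proof -
  have "(\<Sum>x\<in>V. real (deg V E x) * markov_op V E g a x * b x)
      = (\<Sum>x\<in>V. \<Sum>y\<in>V. (real (deg V E x) * trans_prob V E g x y) * a y * b x)"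
    by (simp add: markov_op_def sum_distrib_left sum_distrib_right mult_ac)
  also have "\<dots> = (\<Sum>y\<in>V. \<Sum>x\<in>V. (real (deg V E y) * trans_prob V E g y x) * a y * b x)"
    by (subst sum.swap) (simp add: trans_prob_detailed_balance[OF assms])
  also have "\<dots> = (\<Sum>x\<in>V. real (deg V E x) * a x * markov_op V E g b x)"
    by (simp add: markov_op_def sum_distrib_left sum_distrib_right mult_ac)
  finally show ?thesis .
qed

lemma markov_op_square_eq_zero:
  assumes graph: "connected_simple_graph V E" and "2 \<le> card V"
    and "markov_op V E g (markov_op V E g a) = 0"
  shows "markov_op V E g a = 0"
proof
  fix x
  define b where "b = markov_op V E g a"
  have fin: "finite V"
    using graph by (simp add: connected_simple_graph_def)
  \<comment> \<open>Self-adjointness turns the degree-weighted square norm of b into its pairing with T b = 0.\<close>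
  have "(\<Sum>x\<in>V. real (deg V E x) * b x * b x) = (\<Sum>x\<in>V. real (deg V E x) * a x * markov_op V E g b x)"
    unfolding b_def by (rule markov_op_self_adjoint[OF graph])
  also have "\<dots> = 0"
    using assms(3) by (simp add: b_def)
  finally have "\<forall>x\<in>V. real (deg V E x) * b x * b x = 0"
    using fin by (subst sum_nonneg_eq_0_iff[symmetric]) (auto simp: mult.assoc)
  then have "b x = 0" if "x \<in> V"
    using deg_pos[OF graph \<open>2 \<le> card V\<close> that] that by auto
  then have "b x = 0"
    using markov_op_outside[OF graph, of x] by (cases "x \<in> V") (auto simp: b_def)
  then show "markov_op V E g a x = 0 x"
    by (simp add: b_def)
qed

lemma wasserstein_point_mass:
  assumes fin: "finite V" and v: "v \<in> V"
    and nonneg: "\<And>x. 0 \<le> mu x" and total: "(\<Sum>x\<in>V. mu x) = 1"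
  shows "wasserstein V E mu (\<lambda>y. if y = v then 1 else 0) = (\<Sum>x\<in>V. mu x * real (gdist E x v))"
proof -
  let ?C = "couplings V mu (\<lambda>y. if y = v then 1 else 0)"
  let ?cost = "\<lambda>p. \<Sum>x\<in>V. \<Sum>y\<in>V. p x y * real (gdist E x y)"
  define p0 where "p0 x y = (if x \<in> V \<and> y = v then mu x else 0)" for x y
  have p0: "p0 \<in> ?C"
    using fin v nonneg total by (auto simp: couplings_def p0_def sum.If_cases)
  have cost: "?cost p = (\<Sum>x\<in>V. mu x * real (gdist E x v))" if p: "p \<in> ?C" for p
  proof -
    have column: "p x y = 0" if "x \<in> V" "y \<in> V" "y \<noteq> v" for x y
      using p that fin sum_nonneg_eq_0_iff[of V "\<lambda>x. p x y"] by (auto simp: couplings_def)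
    have row: "(\<Sum>y\<in>V. p x y * h y) = p x v * h v" if "x \<in> V" for x and h :: "'a \<Rightarrow> real"
      using fin v column[OF that] by (subst sum.remove[OF fin v]) (auto intro: sum.neutral)
    have "p x v = mu x" if "x \<in> V" for x
      using p that row[OF that, of "\<lambda>_. 1"] by (simp add: couplings_def)
    then show ?thesis
      by (simp add: row)
  qed
  have "?cost ` ?C = (\<lambda>_. \<Sum>x\<in>V. mu x * real (gdist E x v)) ` ?C"
    using cost by (rule image_cong[OF refl])
  also have "\<dots> = {\<Sum>x\<in>V. mu x * real (gdist E x v)}"
    using p0 by (rule image_constant)
  finally have "?cost ` ?C = {\<Sum>x\<in>V. mu x * real (gdist E x v)}" .
  then show ?thesis
    by (simp add: wasserstein_def)
qed

lemma W_seq_eq_markov_op_power: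
  assumes "guvab V E u v \<alpha> 1" "2 \<le> card V"
  shows "W_seq V E u v \<alpha> 1 n = (markov_op V E \<alpha> ^^ n) (\<lambda>x. real (gdist E x v)) u"
proof -
  have graph: "connected_simple_graph V E" and fin: "finite V" and "u \<in> V" "v \<in> V"
    and "0 \<le> \<alpha>" "\<alpha> \<le> 1"
    using assms(1) by (auto simp: guvab_def connected_simple_graph_def)
  have "W_seq V E u v \<alpha> 1 n = wasserstein V E (walk_dist V E \<alpha> u n) (\<lambda>y. if y = v then 1 else 0)"
    by (simp only: W_seq_def walk_dist_laziness_one[OF fin \<open>v \<in> V\<close>])
  also have "\<dots> = (\<Sum>x\<in>V. walk_dist V E \<alpha> u n x * real (gdist E x v))"
    by (rule wasserstein_point_mass[OF fin \<open>v \<in> V\<close> walk_dist_nonneg[OF \<open>0 \<le> \<alpha>\<close> \<open>\<alpha> \<le> 1\<close>]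
          sum_walk_dist[OF graph assms(2) \<open>u \<in> V\<close>]])
  also have "\<dots> = (markov_op V E \<alpha> ^^ n) (\<lambda>x. real (gdist E x v)) u"
    by (rule sum_walk_dist_mult_eq_markov_op_power[OF fin \<open>u \<in> V\<close>])
  finally show ?thesis .
qed

(* On a single vertex the degree is 0, so a walk with laziness below 1 loses mass: there are no
   couplings, and W_n is the junk value Inf {} for every n >= 1. *)

lemma W_seq_single_vertex:
  assumes "guvab V E u v \<alpha> 1" "card V = 1" "\<alpha> < 1" "1 \<le> n"
  shows "W_seq V E u v \<alpha> 1 n = Inf {}"
proof -
  obtain w where V: "V = {w}"
    using assms(2) card_1_singletonE by blast
  have "u = w" "v = w" "0 \<le> \<alpha>"
    using assms(1) V by (auto simp: guvab_def)
  have mu: "walk_dist V E \<alpha> u k w = \<alpha> ^ k" for k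
    by (induction k) (simp_all add: V \<open>u = w\<close> trans_prob_def)
  have nu: "walk_dist V E 1 v n w = 1"
    using walk_dist_laziness_one[of V v E n] by (simp add: V \<open>v = w\<close>)
  have "\<alpha> ^ n < 1"
    using assms(3,4) \<open>0 \<le> \<alpha>\<close> by (simp add: power_less_one_iff)
  have "p \<notin> couplings V (walk_dist V E \<alpha> u n) (walk_dist V E 1 v n)" for p
  proof
    assume "p \<in> couplings V (walk_dist V E \<alpha> u n) (walk_dist V E 1 v n)"
    then have "p w w = \<alpha> ^ n" "p w w = 1"
      using mu[of n] nu by (simp_all add: couplings_def V)
    then show False
      using \<open>\<alpha> ^ n < 1\<close> by simp
  qed
  then have "couplings V (walk_dist V E \<alpha> u n) (walk_dist V E 1 v n) = {}"
    by blast
  then show ?thesis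
    by (simp add: W_seq_def wasserstein_def)
qed

lemma W_seq_laziness_one:
  assumes "guvab V E u v 1 1"
  shows "W_seq V E u v 1 1 n = W_seq V E u v 1 1 0"
  using assms by (simp add: guvab_def connected_simple_graph_def W_seq_def walk_dist_laziness_one)

theorem lemma7p2:
  fixes V :: "'a set" and E :: "'a \<Rightarrow> 'a \<Rightarrow> bool" and u v :: 'a and \<alpha> \<beta> :: real
  assumes "guvab V E u v \<alpha> \<beta>" and "\<beta> = 1"
    and "\<exists>N. \<forall>n\<ge>N. W_seq V E u v \<alpha> \<beta> n = W_seq V E u v \<alpha> \<beta> N"
  shows "\<forall>n\<ge>1. W_seq V E u v \<alpha> \<beta> n = W_seq V E u v \<alpha> \<beta> 1"
proof -
  have guvab: "guvab V E u v \<alpha> 1" and graph: "connected_simple_graph V E"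
    and fin: "finite V" and "\<alpha> \<le> 1" "card V \<noteq> 0"
    using assms(1,2) by (auto simp: guvab_def connected_simple_graph_def)
  then consider "\<alpha> = 1" | "card V = 1" "\<alpha> < 1" | "2 \<le> card V"
    by linarith
  then show ?thesis
  proof cases
    case 1
    then show ?thesis
      using W_seq_laziness_one[of V E u v] guvab assms(2) by metis
  next
    case 2
    then show ?thesis
      using W_seq_single_vertex[OF guvab] assms(2) by simp
  next
    case 3
    obtain N where "\<forall>n\<ge>N. W_seq V E u v \<alpha> 1 n = W_seq V E u v \<alpha> 1 N"
      using assms(2,3) by blast
    then have "\<forall>n\<ge>N. (markov_op V E \<alpha> ^^ n) (\<lambda>x. real (gdist E x v)) u
        = (markov_op V E \<alpha> ^^ N) (\<lambda>x. real (gdist E x v)) u"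
      unfolding W_seq_eq_markov_op_power[OF guvab 3] .
    from orbit_value_eventually_const_imp_const[OF linear_markov_op
        markov_op_square_eq_zero[OF graph 3] finite_imageI[OF fin] range_markov_op this]
    show ?thesis
      unfolding assms(2) W_seq_eq_markov_op_power[OF guvab 3] by simp
  qed
qed

end
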